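(* Let $X$ be a nonnegative integer-valued random variable whose PGF $X(z)$ has radius of convergence $r>1$, mean $\mu=X'(1)>0$ and variance $\sigma^2=X''(1)-X'(1)^2+X'(1)>0$, such that $|X(z)|<X(r_1)$ whenever $|z|=r_1$, $z\ne r_1$, $r_1\in(0,r)$. For positive integers $n,s$ let $A(z)=X(z)^n$, $\mu_A=n\mu<s$, with degree of $X(z)$ larger than $s/n$. Suppose $\frac{n\mu}{s}=1-\frac{\gamma}{\sqrt s}$ with $\gamma$ bounded away from $0$ and $\infty$ as $s\to\infty$, let $a_0=\sqrt{2\mu}/\sigma$, $b_0=\frac{\gamma\sqrt\mu}{\sigma\sqrt2}$, and for integers $k$ with $k=o(s)$ let $Z_k$ denote the zero of $z^s-A(z)$ in $1<|z|<r$ satisfying $Z_k=1+\frac{a_0}{\sqrt s}\big(b_0+\sqrt{b_0^2-2\pi i k}\big)+O\big(\frac{1+|k|}{s}\big)$ (principal square root). Then, when $k=o(s)$, $$-\frac{s-\mu_A}{sZ_k^{s-1}-A'(Z_k)}=\frac{b_0}{\sqrt{b_0^2-2\pi i k}}\,\frac{1}{Z_k^{s-1}}\Big(1+O\Big(\frac{1+|k|}{\sqrt s}\Big)\Big),\qquad s\to\infty.$$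
   Context: $O$-terms refer to $s\to\infty$ with constants independent of $s$ and $k$. *)

theory Defs
  imports "HOL-Probability.Probability_Mass_Function" "HOL-Library.Landau_Symbols"
begin

definition pgf :: "nat pmf \<Rightarrow> complex \<Rightarrow> complex" where
  "pgf P z = (\<Sum>j. complex_of_real (pmf P j) * z ^ j)"

definition pgf_radius :: "nat pmf \<Rightarrow> ereal" where
  "pgf_radius P = conv_radius (\<lambda>j. complex_of_real (pmf P j))"

text \<open>mu = X'(1), sigma^2 = X''(1) - X'(1)^2 + X'(1) (real parts; they are real).\<close>
definition pgf_mean :: "nat pmf \<Rightarrow> real" where
  "pgf_mean P = Re (deriv (pgf P) 1)"

definition pgf_var :: "nat pmf \<Rightarrow> real" where
  "pgf_var P = Re (deriv (deriv (pgf P)) 1) - (pgf_mean P)\<^sup>2 + pgf_mean P"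

end

theory Submission
  imports Defs "HOL-Analysis.FPS_Convergence" "HOL-Complex_Analysis.Complex_Analysis"
begin

text \<open>At a root Z of z^s = X(z)^n the denominator factors as s Z^(s-1) - (X^n)'(Z) = -Z^(s-1) D with
  D = n Z X'(Z)/X(Z) - s. Near 1 the function z X'(z)/X(z) equals \<mu> + \<sigma>^2 (z - 1) + O((z - 1)^2).
  Substituting n \<mu> = s - \<gamma> sqrt s and the expansion of Z, the terms of order sqrt s cancel except
  \<kappa> sqrt s R, where R = sqrt (b0^2 - 2\<pi>ik) and \<kappa> = \<sigma> sqrt (2/\<mu>), and the rest is O(1 + |k|).
  Since |R| is of order sqrt (1 + |k|), the relative error of D against \<kappa> sqrt s R is
  O(sqrt ((1 + |k|)/s)), while the numerator is s - n \<mu> = \<gamma> sqrt s = \<kappa> b0 sqrt s.\<close>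

definition pgf_fps :: "nat pmf \<Rightarrow> complex fps" where
  "pgf_fps P = Abs_fps (\<lambda>j. complex_of_real (pmf P j))"

definition pgf_deriv :: "nat pmf \<Rightarrow> complex \<Rightarrow> complex" where
  "pgf_deriv P = eval_fps (fps_deriv (pgf_fps P))"

lemma pgf_eq_eval_fps: "pgf P = eval_fps (pgf_fps P)"
  by (auto simp: pgf_def eval_fps_def pgf_fps_def fun_eq_iff)

lemma pgf_radius_eq_fps_conv_radius: "pgf_radius P = fps_conv_radius (pgf_fps P)"
  by (simp add: pgf_radius_def fps_conv_radius_def pgf_fps_def)

lemma pgf_1 [simp]: "pgf P 1 = 1"
proof -
  have "pmf P sums 1"
    using sums_infsetsum_nat'[OF pmf_abs_summable, of P] infsetsum_pmf_eq_1[of P UNIV] by simp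
  hence "(\<lambda>j. complex_of_real (pmf P j)) sums 1"
    using sums_of_real by fastforce
  thus ?thesis by (simp add: pgf_def sums_iff)
qed

lemma has_field_derivative_pgf:
  "ereal (cmod z) < pgf_radius P \<Longrightarrow> (pgf P has_field_derivative pgf_deriv P z) (at z)"
  unfolding pgf_eq_eval_fps pgf_deriv_def pgf_radius_eq_fps_conv_radius
  by (rule has_field_derivative_eval_fps)

lemma Im_eval_fps_of_real:
  fixes F :: "complex fps"
  assumes "\<And>j. Im (fps_nth F j) = 0" and "ereal \<bar>x\<bar> < fps_conv_radius F"
  shows "Im (eval_fps F (of_real x)) = 0"
proof -
  have "summable (\<lambda>j. fps_nth F j * of_real x ^ j)"
    using assms(2) unfolding fps_conv_radius_def by (intro summable_in_conv_radius) simp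
  hence "(\<lambda>j. Im (fps_nth F j * of_real x ^ j)) sums Im (eval_fps F (of_real x))"
    by (intro sums_Im) (simp add: eval_fps_def summable_sums)
  moreover have "Im (fps_nth F j * of_real x ^ j) = 0" for j
    using assms(1) by (simp flip: of_real_power)
  ultimately have "(\<lambda>j. 0) sums Im (eval_fps F (of_real x))"
    by (simp only:)
  thus ?thesis
    by (simp add: sums_iff)
qed

lemma pgf_deriv_1:
  assumes "pgf_radius P > 1"
  shows "pgf_deriv P 1 = of_real (pgf_mean P)"
proof -
  have "Im (pgf_deriv P 1) = 0"
    using Im_eval_fps_of_real[of "fps_deriv (pgf_fps P)" 1] fps_conv_radius_deriv[of "pgf_fps P"] assms
    by (auto simp: pgf_deriv_def fps_deriv_nth pgf_fps_def pgf_radius_eq_fps_conv_radius one_ereal_def)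
  moreover have "deriv (pgf P) 1 = pgf_deriv P 1"
    using assms by (intro DERIV_imp_deriv has_field_derivative_pgf) (simp add: one_ereal_def)
  ultimately show ?thesis
    by (simp add: pgf_mean_def complex_eq_iff)
qed

lemma deriv_pgf_deriv_1:
  assumes "pgf_radius P > 1"
  shows "deriv (pgf_deriv P) 1 = of_real (pgf_var P + (pgf_mean P)\<^sup>2 - pgf_mean P)"
proof -
  let ?F2 = "fps_deriv (fps_deriv (pgf_fps P))"
  have rad1: "fps_conv_radius (fps_deriv (pgf_fps P)) > 1"
    using assms fps_conv_radius_deriv[of "pgf_fps P"] by (simp add: pgf_radius_eq_fps_conv_radius)
  have rad: "fps_conv_radius ?F2 > 1"
    using rad1 fps_conv_radius_deriv[of "fps_deriv (pgf_fps P)"] by simp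
  have "deriv (pgf_deriv P) 1 = eval_fps ?F2 1"
    using rad1 unfolding pgf_deriv_def
    by (intro DERIV_imp_deriv has_field_derivative_eval_fps) (simp add: one_ereal_def)
  moreover have "Im (eval_fps ?F2 1) = 0"
    using Im_eval_fps_of_real[of ?F2 1] rad by (auto simp: fps_deriv_nth pgf_fps_def one_ereal_def)
  moreover have "eventually (\<lambda>z. deriv (pgf P) z = pgf_deriv P z) (nhds 1)"
  proof -
    have "eventually (\<lambda>z. z \<in> eball 0 (pgf_radius P)) (nhds (1::complex))"
      using assms by (intro eventually_nhds_in_open) (auto simp: one_ereal_def)
    thus ?thesis
      by eventually_elim (auto intro: DERIV_imp_deriv has_field_derivative_pgf)
  qed
  hence "deriv (deriv (pgf P)) 1 = deriv (pgf_deriv P) 1"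
    by (rule deriv_cong_ev) simp
  ultimately show ?thesis
    using pgf_deriv_1[OF assms] by (simp add: pgf_var_def complex_eq_iff)
qed

lemma holomorphic_on_linear_remainder_bound:
  assumes "f holomorphic_on S" "open S" "cball c r \<subseteq> S"
  obtains B where "\<And>z. z \<in> cball c r \<Longrightarrow> cmod (f z - f c - deriv f c * (z - c)) \<le> B * cmod (z - c) ^ 2"
proof -
  have hol: "(deriv ^^ i) f holomorphic_on S" for i
    using assms(1,2) by (rule holomorphic_higher_deriv)
  have "compact ((deriv ^^ 2) f ` cball c r)"
    by (intro compact_continuous_image holomorphic_on_imp_continuous_on
        holomorphic_on_subset[OF hol assms(3)]) simp
  then obtain B where B: "\<And>z. z \<in> cball c r \<Longrightarrow> cmod ((deriv ^^ 2) f z) \<le> B"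
    by (meson bounded_iff compact_imp_bounded imageI)
  have "cmod ((deriv ^^ 0) f z - (\<Sum>i\<le>1. (deriv ^^ i) f c * (z - c) ^ i / fact i))
          \<le> B * cmod (z - c) ^ Suc 1 / fact 1" if "z \<in> cball c r" for z
  proof (rule complex_Taylor[of "cball c r"])
    show "((deriv ^^ i) f has_field_derivative (deriv ^^ Suc i) f x) (at x within cball c r)"
      if "x \<in> cball c r" for i x
      using holomorphic_derivI[OF hol assms(2)] that assms(3) by auto
  qed (use B that in \<open>auto simp: numeral_2_eq_2 dist_commute intro: order.trans[OF zero_le_dist]\<close>)
  thus thesis
    by (intro that[of B]) (simp add: power2_eq_square diff_diff_eq)
qed

definition pgf_log_deriv :: "nat pmf \<Rightarrow> complex \<Rightarrow> complex" where
  "pgf_log_deriv P z = z * pgf_deriv P z / pgf P z"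

lemma pgf_log_deriv_expansion:
  assumes "pgf_radius P > 1"
  obtains \<delta> C where "\<delta> > 0"
    and "\<And>w. cmod w \<le> \<delta> \<Longrightarrow> ereal (cmod (1 + w)) < pgf_radius P \<and> pgf P (1 + w) \<noteq> 0 \<and>
           cmod (pgf_log_deriv P (1 + w) - of_real (pgf_mean P) - of_real (pgf_var P) * w) \<le> C * cmod w ^ 2"
proof -
  define D :: "complex set" where "D = eball 0 (pgf_radius P)"
  define S where "S = D \<inter> pgf P -` (- {0})"
  have D: "open D" "1 \<in> D"
    using assms by (auto simp: D_def one_ereal_def)
  have hol_pgf: "pgf P holomorphic_on D" and hol_deriv: "pgf_deriv P holomorphic_on D"
    by (auto simp: D_def pgf_eq_eval_fps pgf_deriv_def pgf_radius_eq_fps_conv_radius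
        intro!: holomorphic_intros dest: order.strict_trans2[OF _ fps_conv_radius_deriv])
  have S: "open S" "1 \<in> S"
    using D continuous_open_preimage[OF holomorphic_on_imp_continuous_on[OF hol_pgf] D(1), of "- {0}"]
    by (auto simp: S_def)
  have hol: "pgf_log_deriv P holomorphic_on S"
    unfolding pgf_log_deriv_def[abs_def] S_def
    by (intro holomorphic_intros holomorphic_on_subset[OF hol_pgf] holomorphic_on_subset[OF hol_deriv]) auto
  obtain \<delta> where \<delta>: "\<delta> > 0" "cball 1 \<delta> \<subseteq> S"
    using S open_contains_cball by blast
  obtain C where C: "\<And>z. z \<in> cball 1 \<delta> \<Longrightarrow>
      cmod (pgf_log_deriv P z - pgf_log_deriv P 1 - deriv (pgf_log_deriv P) 1 * (z - 1)) \<le> C * cmod (z - 1) ^ 2"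
    using holomorphic_on_linear_remainder_bound[OF hol S(1) \<delta>(2)] by blast
  have "(pgf_log_deriv P has_field_derivative
          ((pgf_deriv P 1 + deriv (pgf_deriv P) 1) * pgf P 1 - pgf_deriv P 1 * pgf_deriv P 1) / (pgf P 1)\<^sup>2) (at 1)"
    unfolding pgf_log_deriv_def[abs_def]
    using D holomorphic_derivI[OF hol_deriv D(1)] has_field_derivative_pgf[of 1 P] assms
    by (auto intro!: derivative_eq_intros simp: one_ereal_def power2_eq_square algebra_simps)
  hence "deriv (pgf_log_deriv P) 1 = pgf_var P"
    using assms by (auto dest!: DERIV_imp_deriv simp: pgf_deriv_1 deriv_pgf_deriv_1 power2_eq_square)
  moreover have "pgf_log_deriv P 1 = pgf_mean P"
    using assms by (simp add: pgf_log_deriv_def pgf_deriv_1)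
  ultimately show thesis
  proof (intro that[of \<delta> C])
    fix w :: complex
    assume "cmod w \<le> \<delta>"
    hence "1 + w \<in> cball 1 \<delta>"
      by (simp add: dist_norm)
    thus "ereal (cmod (1 + w)) < pgf_radius P \<and> pgf P (1 + w) \<noteq> 0 \<and>
          cmod (pgf_log_deriv P (1 + w) - of_real (pgf_mean P) - of_real (pgf_var P) * w) \<le> C * cmod w ^ 2"
      using \<delta>(2) C[of "1 + w"] by (auto simp: S_def D_def \<open>pgf_log_deriv P 1 = pgf_mean P\<close>
        \<open>deriv (pgf_log_deriv P) 1 = pgf_var P\<close>)
  qed (simp add: \<delta>(1))
qed

lemma derivative_at_root_factor:
  fixes f :: "complex \<Rightarrow> complex"
  assumes "(f has_field_derivative f') (at z)" "z ^ s = f z ^ n" "f z \<noteq> 0" "s > 0"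
  shows "of_nat s * z ^ (s - 1) - deriv (\<lambda>x. f x ^ n) z = z ^ (s - 1) * (of_nat s - of_nat n * (z * f' / f z))"
proof -
  have "deriv (\<lambda>x. f x ^ n) z = of_nat n * f' * f z ^ (n - 1)"
    using DERIV_imp_deriv[OF DERIV_power[OF assms(1), of n]] by (simp add: algebra_simps)
  also have "\<dots> = z ^ (s - 1) * (of_nat n * (z * f' / f z))"
  proof (cases "n = 0")
    case False
    have "z ^ (s - 1) * z = f z ^ (n - 1) * f z"
      using assms(2,4) False power_minus_mult[of s z] power_minus_mult[of n "f z"] by simp
    thus ?thesis
      using assms(3) by (simp add: field_simps)
  qed simp
  finally show ?thesis
    by (simp add: algebra_simps)
qed

lemma norm_divide_minus_one_le:
  fixes c d :: "'a :: real_normed_field"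
  assumes "norm (d - c) \<le> norm c / 2" "c \<noteq> 0"
  shows "norm (c / d - 1) \<le> 2 * norm (d - c) / norm c"
proof -
  have "norm c \<le> norm d + norm (d - c)"
    using norm_triangle_sub[of c d] by (simp add: norm_minus_commute)
  hence d: "norm c / 2 \<le> norm d"
    using assms(1) by linarith
  hence "d \<noteq> 0"
    using assms(2) by auto
  hence "c / d - 1 = (c - d) / d"
    by (simp add: diff_divide_distrib)
  hence "norm (c / d - 1) = norm (d - c) / norm d"
    by (simp add: norm_divide norm_minus_commute)
  also have "\<dots> \<le> norm (d - c) / (norm c / 2)"
    using d assms(2) \<open>d \<noteq> 0\<close> by (intro divide_left_mono) auto
  finally show ?thesis
    by (simp add: mult.commute)
qed

lemma bigo_tendsto_0:
  fixes f g :: "'a \<Rightarrow> real"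
  assumes "f \<in> O[F](g)" "(g \<longlongrightarrow> 0) F"
  shows "(f \<longlongrightarrow> 0) F"
proof -
  have "g \<in> o[F](\<lambda>_. 1)"
    using assms(2) by (intro smalloI_tendsto) auto
  hence "f \<in> o[F](\<lambda>_. 1)"
    by (rule landau_o.big_small_trans[OF assms(1)])
  thus ?thesis
    using smalloD_tendsto by fastforce
qed

lemma bigo_mult_cancel_divide:
  fixes f g h :: "'a \<Rightarrow> 'b :: real_normed_field"
  assumes "f \<in> O[F](\<lambda>x. g x / h x)" "eventually (\<lambda>x. h x \<noteq> 0) F"
  shows "(\<lambda>x. h x * f x) \<in> O[F](g)"
proof -
  have "(\<lambda>x. h x * f x) \<in> O[F](\<lambda>x. h x * (g x / h x))"
    by (rule landau_o.big.mult[OF landau_o.big_refl assms(1)])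
  also have "eventually (\<lambda>x. h x * (g x / h x) = g x) F"
    using assms(2) by eventually_elim simp
  hence "(\<lambda>x. h x * (g x / h x)) \<in> O[F](g)"
    by (intro bigthetaD1 bigthetaI_cong)
  finally show ?thesis .
qed

text \<open>The algebra behind the expansion of D = n G - s at the root: N = n, m = \<mu>, c = \<sigma>^2/\<mu>,
  q = sqrt s, g = \<gamma>, k = \<kappa>, and w = Z - 1 = a (b + R) + e with a = a0 / sqrt s, b = b0.\<close>
lemma linearisation_identity:
  fixes N G w e R s q g k a c m b :: "'a::comm_ring_1"
  assumes "N * m = s - g * q" "w = a * (b + R) + e" "s * c * a = k * q" "k * b = g"
  shows "N * G - s - k * q * R = s * c * e - g * q * c * w + N * (G - m - m * c * w)"
proof -
  have "(N * G - s - k * q * R) - (s * c * e - g * q * c * w + N * (G - m - m * c * w))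
      = (N * m - (s - g * q)) * (1 + c * w) + s * c * (w - (a * (b + R) + e))
        + (s * c * a - k * q) * (b + R) + q * (k * b - g)"
    by (simp add: algebra_simps)
  thus ?thesis
    using assms by simp
qed

lemma norm_sq_minus_2pi_i_bounds:
  fixes b \<beta> B :: real and k :: int
  assumes "\<beta> \<le> \<bar>b\<bar>" "\<bar>b\<bar> \<le> B" "0 \<le> \<beta>"
  defines "z \<equiv> complex_of_real (b\<^sup>2) - 2 * complex_of_real pi * \<i> * of_int k"
  shows "min (\<beta>\<^sup>2) (2 * pi) / 2 * (1 + \<bar>real_of_int k\<bar>) \<le> cmod z"
    and "cmod z \<le> max (B\<^sup>2) (2 * pi) * (1 + \<bar>real_of_int k\<bar>)"
proof -
  have Re: "\<bar>Re z\<bar> = b\<^sup>2" and Im: "\<bar>Im z\<bar> = 2 * pi * \<bar>real_of_int k\<bar>"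
    by (simp_all add: z_def abs_mult)
  have b_sq: "\<beta>\<^sup>2 \<le> b\<^sup>2" "b\<^sup>2 \<le> B\<^sup>2"
    using assms(1-3) power_mono[of \<beta> "\<bar>b\<bar>" 2] power_mono[of "\<bar>b\<bar>" B 2] by simp_all
  have "min (\<beta>\<^sup>2) (2 * pi) * \<bar>real_of_int k\<bar> \<le> 2 * pi * \<bar>real_of_int k\<bar>"
    by (intro mult_right_mono) auto
  hence "min (\<beta>\<^sup>2) (2 * pi) / 2 * (1 + \<bar>real_of_int k\<bar>) \<le> (b\<^sup>2 + 2 * pi * \<bar>real_of_int k\<bar>) / 2"
    using b_sq min.cobounded1[of "\<beta>\<^sup>2" "2 * pi"] by (simp add: distrib_left)
  also have "\<dots> \<le> cmod z"
    using add_mono[OF abs_Re_le_cmod[of z] abs_Im_le_cmod[of z]] Re Im by simp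
  finally show "min (\<beta>\<^sup>2) (2 * pi) / 2 * (1 + \<bar>real_of_int k\<bar>) \<le> cmod z" .
  have "2 * pi * \<bar>real_of_int k\<bar> \<le> max (B\<^sup>2) (2 * pi) * \<bar>real_of_int k\<bar>"
    by (intro mult_right_mono) auto
  hence "b\<^sup>2 + 2 * pi * \<bar>real_of_int k\<bar> \<le> max (B\<^sup>2) (2 * pi) * (1 + \<bar>real_of_int k\<bar>)"
    using b_sq max.cobounded1[of "B\<^sup>2" "2 * pi"] by (simp add: distrib_left)
  thus "cmod z \<le> max (B\<^sup>2) (2 * pi) * (1 + \<bar>real_of_int k\<bar>)"
    using cmod_le[of z] Re Im by simp
qed

locale pgf_root_expansion =
  fixes P :: "nat pmf" and n :: "nat \<Rightarrow> nat" and gamma :: "nat \<Rightarrow> real"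
    and k :: "nat \<Rightarrow> int" and Z :: "nat \<Rightarrow> complex"
    and mu sig a0 :: real and b0 :: "nat \<Rightarrow> real"
  defines "mu \<equiv> pgf_mean P" and "sig \<equiv> sqrt (pgf_var P)"
    and "a0 \<equiv> sqrt (2 * mu) / sig" and "b0 \<equiv> (\<lambda>s. gamma s * sqrt mu / (sig * sqrt 2))"
  assumes radius: "pgf_radius P > 1"
    and mean_pos: "mu > 0"
    and var_pos: "pgf_var P > 0"
    and gamma_def: "\<forall>\<^sub>F s in sequentially. real (n s) * mu / real s = 1 - gamma s / sqrt (real s)"
    and gamma_bounded: "\<exists>c C. 0 < c \<and> c \<le> C \<and> (\<forall>\<^sub>F s in sequentially. c \<le> gamma s \<and> gamma s \<le> C)"
    and k_small: "(\<lambda>s. real_of_int (k s)) \<in> o(\<lambda>s. real s)"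
    and Z_zero: "\<forall>\<^sub>F s in sequentially. Z s ^ s = pgf P (Z s) ^ n s"
    and Z_approx: "(\<lambda>s. cmod (Z s - (1 + complex_of_real (a0 / sqrt (real s)) *
                      (complex_of_real (b0 s) + csqrt (complex_of_real ((b0 s)\<^sup>2)
                         - 2 * complex_of_real pi * \<i> * of_int (k s))))))
                   \<in> O(\<lambda>s. (1 + \<bar>real_of_int (k s)\<bar>) / real s)"
begin

definition kappa :: real where
  "kappa = sig * sqrt 2 / sqrt mu"

definition R :: "nat \<Rightarrow> complex" where
  "R s = csqrt (complex_of_real ((b0 s)\<^sup>2) - 2 * complex_of_real pi * \<i> * of_int (k s))"

definition u :: "nat \<Rightarrow> real" where
  "u s = 1 + \<bar>real_of_int (k s)\<bar>"

definition eta :: "nat \<Rightarrow> complex" where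
  "eta s = Z s - 1 - complex_of_real (a0 / sqrt (real s)) * (complex_of_real (b0 s) + R s)"

definition D :: "nat \<Rightarrow> complex" where
  "D s = of_nat (n s) * pgf_log_deriv P (Z s) - of_nat s"

definition rho :: "nat \<Rightarrow> complex" where
  "rho s = pgf_log_deriv P (Z s) - of_real mu - of_real (pgf_var P) * (Z s - 1)"

definition D_lead :: "nat \<Rightarrow> complex" where
  "D_lead s = of_real (kappa * sqrt (real s)) * R s"

lemma sig_pos: "sig > 0"
  using var_pos by (simp add: sig_def)

lemma kappa_pos: "kappa > 0"
  using sig_pos mean_pos by (simp add: kappa_def)

lemma a0_kappa: "a0 * pgf_var P / mu = kappa"
proof -
  have "pgf_var P = sig * sig" "sqrt (2 * mu) = sqrt 2 * sqrt mu" "mu = sqrt mu * sqrt mu"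
    using var_pos mean_pos by (simp_all add: sig_def real_sqrt_mult)
  thus ?thesis
    using sig_pos mean_pos unfolding a0_def kappa_def by (simp add: field_simps)
qed

lemma kappa_b0: "kappa * b0 s = gamma s"
  using sig_pos mean_pos by (simp add: kappa_def b0_def field_simps)

lemma eventually_b0_bounds:
  obtains \<beta> B where "0 < \<beta>" "\<forall>\<^sub>F s in sequentially. \<beta> \<le> b0 s \<and> b0 s \<le> B"
proof -
  obtain c C where "0 < c" and ev: "\<forall>\<^sub>F s in sequentially. c \<le> gamma s \<and> gamma s \<le> C"
    using gamma_bounded by blast
  have "\<forall>\<^sub>F s in sequentially. c / kappa \<le> b0 s \<and> b0 s \<le> C / kappa"
  proof (rule eventually_mono[OF ev])
    fix s
    have "b0 s = gamma s / kappa"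
      using kappa_pos kappa_b0[of s] by (simp add: field_simps)
    thus "c \<le> gamma s \<and> gamma s \<le> C \<Longrightarrow> c / kappa \<le> b0 s \<and> b0 s \<le> C / kappa"
      using kappa_pos by (simp add: divide_right_mono)
  qed
  thus thesis
    using \<open>0 < c\<close> kappa_pos by (intro that) auto
qed

lemma u_ge_1: "u s \<ge> 1"
  by (simp add: u_def)

lemma u_nonneg [simp]: "u s \<ge> 0"
  by (simp add: u_def)

lemma sqrt_u_le_u: "sqrt (u s) \<le> u s"
  using u_ge_1[of s] by (intro real_le_lsqrt) (simp_all add: power2_eq_square mult_le_cancel_left1)

lemma u_over_s_tendsto_0: "((\<lambda>s. u s / real s) \<longlongrightarrow> 0) sequentially"
proof -
  have "((\<lambda>s. 1 / real s + \<bar>real_of_int (k s) / real s\<bar>) \<longlongrightarrow> 0 + \<bar>0\<bar>) sequentially"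
    by (intro tendsto_add tendsto_rabs lim_1_over_n smalloD_tendsto[OF k_small])
  thus ?thesis
    by (simp add: u_def add_divide_distrib)
qed

lemma eventually_norm_R_bounds:
  obtains m M where "0 < m" "\<forall>\<^sub>F s in sequentially. sqrt (m * u s) \<le> cmod (R s) \<and> cmod (R s) \<le> sqrt (M * u s)"
proof -
  obtain \<beta> B where "0 < \<beta>" and ev: "\<forall>\<^sub>F s in sequentially. \<beta> \<le> b0 s \<and> b0 s \<le> B"
    by (rule eventually_b0_bounds)
  have "\<forall>\<^sub>F s in sequentially. sqrt (min (\<beta>\<^sup>2) (2 * pi) / 2 * u s) \<le> cmod (R s)
          \<and> cmod (R s) \<le> sqrt (max (B\<^sup>2) (2 * pi) * u s)"
  proof (rule eventually_mono[OF ev])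
    fix s
    assume "\<beta> \<le> b0 s \<and> b0 s \<le> B"
    thus "sqrt (min (\<beta>\<^sup>2) (2 * pi) / 2 * u s) \<le> cmod (R s) \<and> cmod (R s) \<le> sqrt (max (B\<^sup>2) (2 * pi) * u s)"
      using norm_sq_minus_2pi_i_bounds[of \<beta> "b0 s" B "k s"] \<open>0 < \<beta>\<close> by (simp add: R_def u_def)
  qed
  thus thesis
    by (rule that[rotated]) (use \<open>0 < \<beta>\<close> in auto)
qed

lemma eventually_R_nonzero: "\<forall>\<^sub>F s in sequentially. R s \<noteq> 0"
proof -
  obtain m M where "0 < m" and ev: "\<forall>\<^sub>F s in sequentially. sqrt (m * u s) \<le> cmod (R s) \<and> cmod (R s) \<le> sqrt (M * u s)"
    by (rule eventually_norm_R_bounds)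
  show ?thesis
    using ev
  proof eventually_elim
    case (elim s)
    have "0 < sqrt (m * u s)"
      using \<open>0 < m\<close> u_ge_1[of s] by simp
    thus ?case
      using elim by auto
  qed
qed

lemma eta_bigo: "(\<lambda>s. cmod (eta s)) \<in> O(\<lambda>s. u s / real s)"
  using Z_approx by (simp add: eta_def R_def u_def diff_diff_eq)

lemma eventually_u_over_s_le: "\<epsilon> > 0 \<Longrightarrow> \<forall>\<^sub>F s in sequentially. u s / real s \<le> \<epsilon>"
  using order_tendstoD(2)[OF u_over_s_tendsto_0, of \<epsilon>] by (auto elim: eventually_mono)

lemma u_over_s_bigo_sqrt: "(\<lambda>s. u s / real s) \<in> O(\<lambda>s. sqrt (u s / real s))"
proof (rule bigoI[of _ 1])
  show "\<forall>\<^sub>F s in sequentially. norm (u s / real s) \<le> 1 * norm (sqrt (u s / real s))"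
    using eventually_u_over_s_le[OF zero_less_one]
  proof eventually_elim
    case (elim s)
    have "(u s / real s)\<^sup>2 \<le> u s / real s"
      unfolding power2_eq_square using elim by (intro mult_left_le) auto
    thus ?case
      using real_le_rsqrt by simp
  qed
qed

lemma Z_lead_bigo:
  "(\<lambda>s. a0 / sqrt (real s) * (\<bar>b0 s\<bar> + cmod (R s))) \<in> O(\<lambda>s. sqrt (u s / real s))"
proof -
  obtain \<beta> B where "0 < \<beta>" and b0: "\<forall>\<^sub>F s in sequentially. \<beta> \<le> b0 s \<and> b0 s \<le> B"
    by (rule eventually_b0_bounds)
  obtain m M where R: "\<forall>\<^sub>F s in sequentially. sqrt (m * u s) \<le> cmod (R s) \<and> cmod (R s) \<le> sqrt (M * u s)"
    by (rule eventually_norm_R_bounds)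
  have a0: "a0 \<ge> 0"
    using sig_pos mean_pos by (simp add: a0_def)
  have "\<forall>\<^sub>F s in sequentially. norm (a0 / sqrt (real s) * (\<bar>b0 s\<bar> + cmod (R s)))
          \<le> a0 * (B + sqrt M) * norm (sqrt (u s / real s))"
    using b0 R
  proof eventually_elim
    case (elim s)
    have "B \<le> B * sqrt (u s)"
      using elim(1) \<open>0 < \<beta>\<close> u_ge_1[of s] by (simp add: mult_le_cancel_left1)
    moreover have "\<bar>b0 s\<bar> = b0 s"
      using elim(1) \<open>0 < \<beta>\<close> by simp
    moreover have "cmod (R s) \<le> sqrt M * sqrt (u s)"
      using elim(2) by (simp add: real_sqrt_mult)
    ultimately have "\<bar>b0 s\<bar> + cmod (R s) \<le> (B + sqrt M) * sqrt (u s)"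
      using elim(1) unfolding distrib_right by linarith
    hence "a0 / sqrt (real s) * (\<bar>b0 s\<bar> + cmod (R s)) \<le> a0 / sqrt (real s) * ((B + sqrt M) * sqrt (u s))"
      using a0 by (intro mult_left_mono) auto
    thus ?case
      using a0 elim \<open>0 < \<beta>\<close> by (simp add: real_sqrt_divide)
  qed
  thus ?thesis
    by (rule bigoI)
qed

lemma norm_Z_minus_1_bigo: "(\<lambda>s. cmod (Z s - 1)) \<in> O(\<lambda>s. sqrt (u s / real s))"
proof -
  have a0: "a0 \<ge> 0"
    using sig_pos mean_pos by (simp add: a0_def)
  have "cmod (Z s - 1) \<le> a0 / sqrt (real s) * (\<bar>b0 s\<bar> + cmod (R s)) + cmod (eta s)" for s
  proof -
    have "0 \<le> a0 / sqrt s"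
      using a0 by simp
    hence "cmod (of_real (a0 / sqrt s) * (of_real (b0 s) + R s)) \<le> a0 / sqrt s * (\<bar>b0 s\<bar> + cmod (R s))"
      unfolding norm_mult norm_of_real abs_of_nonneg[OF \<open>0 \<le> a0 / sqrt s\<close>]
      using norm_triangle_ineq[of "of_real (b0 s)" "R s"] by (intro mult_left_mono) simp_all
    thus ?thesis
      using norm_triangle_ineq[of "of_real (a0 / sqrt s) * (of_real (b0 s) + R s)" "eta s"]
      by (simp add: eta_def)
  qed
  hence "(\<lambda>s. cmod (Z s - 1)) \<in> O(\<lambda>s. a0 / sqrt (real s) * (\<bar>b0 s\<bar> + cmod (R s)) + cmod (eta s))"
    using a0 by (intro landau_o.big_mono always_eventually) auto
  also have "(\<lambda>s. a0 / sqrt (real s) * (\<bar>b0 s\<bar> + cmod (R s)) + cmod (eta s)) \<in> O(\<lambda>s. sqrt (u s / real s))"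
    using Z_lead_bigo landau_o.big_trans[OF eta_bigo u_over_s_bigo_sqrt] by (rule sum_in_bigo)
  finally show ?thesis .
qed

lemma Z_tendsto_1: "Z \<longlonglongrightarrow> 1"
proof -
  have "((\<lambda>s. sqrt (u s / real s)) \<longlongrightarrow> 0) sequentially"
    using tendsto_real_sqrt[OF u_over_s_tendsto_0] by simp
  with norm_Z_minus_1_bigo have "((\<lambda>s. cmod (Z s - 1)) \<longlongrightarrow> 0) sequentially"
    by (rule bigo_tendsto_0)
  thus ?thesis
    by (simp add: tendsto_norm_zero_iff LIM_zero_iff)
qed

lemma eventually_Z_near_1: "\<epsilon> > 0 \<Longrightarrow> \<forall>\<^sub>F s in sequentially. cmod (Z s - 1) \<le> \<epsilon>"
  using tendstoD[OF Z_tendsto_1, of \<epsilon>] by (auto simp: dist_norm elim: eventually_mono)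

lemma eventually_Z_in_domain:
  "\<forall>\<^sub>F s in sequentially. ereal (cmod (Z s)) < pgf_radius P \<and> pgf P (Z s) \<noteq> 0 \<and> Z s \<noteq> 0"
proof -
  obtain \<delta> C where "\<delta> > 0" and expansion: "\<And>w. cmod w \<le> \<delta> \<Longrightarrow> ereal (cmod (1 + w)) < pgf_radius P \<and> pgf P (1 + w) \<noteq> 0 \<and>
           cmod (pgf_log_deriv P (1 + w) - of_real (pgf_mean P) - of_real (pgf_var P) * w) \<le> C * cmod w ^ 2"
    using pgf_log_deriv_expansion[OF radius] by blast
  show ?thesis
    using eventually_Z_near_1[OF \<open>\<delta> > 0\<close>] eventually_Z_near_1[of "1/2", simplified]
  proof eventually_elim
    case (elim s)
    have "Z s \<noteq> 0"
      using elim(2) by auto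
    thus ?case
      using expansion[OF elim(1)] by simp
  qed
qed

lemma rho_bigo: "(\<lambda>s. cmod (rho s)) \<in> O(\<lambda>s. u s / real s)"
proof -
  obtain \<delta> C where "\<delta> > 0" and expansion: "\<And>w. cmod w \<le> \<delta> \<Longrightarrow> ereal (cmod (1 + w)) < pgf_radius P \<and> pgf P (1 + w) \<noteq> 0 \<and>
           cmod (pgf_log_deriv P (1 + w) - of_real (pgf_mean P) - of_real (pgf_var P) * w) \<le> C * cmod w ^ 2"
    using pgf_log_deriv_expansion[OF radius] by blast
  obtain W where W: "\<forall>\<^sub>F s in sequentially. cmod (Z s - 1) \<le> W * sqrt (u s / real s)"
    using norm_Z_minus_1_bigo by (auto elim!: landau_o.bigE)
  have "\<forall>\<^sub>F s in sequentially. norm (cmod (rho s)) \<le> \<bar>C\<bar> * W\<^sup>2 * norm (u s / real s)"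
    using eventually_Z_near_1[OF \<open>\<delta> > 0\<close>] W
  proof eventually_elim
    case (elim s)
    have "cmod (rho s) \<le> C * cmod (Z s - 1) ^ 2"
      using expansion[OF elim(1)] by (simp add: rho_def mu_def)
    also have "\<dots> \<le> \<bar>C\<bar> * (W * sqrt (u s / real s)) ^ 2"
      using elim(2) by (intro mult_mono power_mono) auto
    also have "\<dots> = \<bar>C\<bar> * W\<^sup>2 * (u s / real s)"
      using u_ge_1[of s] by (simp add: power_mult_distrib)
    finally show ?case
      using u_ge_1[of s] by simp
  qed
  thus ?thesis
    by (rule bigoI)
qed

lemma eventually_n_mu: "\<forall>\<^sub>F s in sequentially. real (n s) * mu = real s - gamma s * sqrt (real s)"
  using gamma_def eventually_gt_at_top[of 0]
proof eventually_elim
  case (elim s)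
  hence "real (n s) * mu = real s - gamma s * (real s / sqrt (real s))"
    by (simp add: field_simps)
  thus ?case
    by (simp add: real_div_sqrt)
qed

lemma eventually_gamma_bounds:
  obtains C where "\<forall>\<^sub>F s in sequentially. 0 \<le> gamma s \<and> gamma s \<le> C"
proof -
  obtain c C where "0 < c" and ev: "\<forall>\<^sub>F s in sequentially. c \<le> gamma s \<and> gamma s \<le> C"
    using gamma_bounded by blast
  have "\<forall>\<^sub>F s in sequentially. 0 \<le> gamma s \<and> gamma s \<le> C"
    by (rule eventually_mono[OF ev]) (use \<open>0 < c\<close> in auto)
  thus thesis
    by (rule that)
qed

lemma eventually_D_expansion:
  "\<forall>\<^sub>F s in sequentially. D s - D_lead s =
      of_real (real s * pgf_var P / mu) * eta s
      - of_real (gamma s * sqrt (real s) * pgf_var P / mu) * (Z s - 1)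
      + of_nat (n s) * rho s"
  using eventually_n_mu eventually_gt_at_top[of 0]
proof eventually_elim
  case (elim s)
  have "complex_of_nat (n s) * of_real mu = of_nat s - of_real (gamma s) * of_real (sqrt s)"
    using arg_cong[OF elim(1), of complex_of_real] by simp
  moreover have "Z s - 1 = of_real (a0 / sqrt s) * (of_real (b0 s) + R s) + eta s"
    by (simp add: eta_def)
  moreover have "of_nat s * of_real (pgf_var P / mu) * of_real (a0 / sqrt s) = of_real kappa * complex_of_real (sqrt s)"
  proof -
    have "real s * (pgf_var P / mu) * (a0 / sqrt s) = a0 * pgf_var P / mu * (real s / sqrt s)"
      by simp
    also have "\<dots> = kappa * sqrt s"
      by (simp add: a0_kappa real_div_sqrt)
    finally show ?thesis
      by (metis of_real_mult of_real_of_nat_eq)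
  qed
  moreover have "complex_of_real kappa * of_real (b0 s) = of_real (gamma s)"
    by (simp flip: of_real_mult add: kappa_b0)
  ultimately have "of_nat (n s) * pgf_log_deriv P (Z s) - of_nat s - of_real kappa * of_real (sqrt s) * R s =
      of_nat s * of_real (pgf_var P / mu) * eta s - of_real (gamma s) * of_real (sqrt s) * of_real (pgf_var P / mu) * (Z s - 1)
      + of_nat (n s) * (pgf_log_deriv P (Z s) - of_real mu - of_real mu * of_real (pgf_var P / mu) * (Z s - 1))"
    by (rule linearisation_identity)
  thus ?case
    using mean_pos by (simp add: D_def D_lead_def rho_def field_simps)
qed

lemma scaled_eta_bigo: "(\<lambda>s. real s * cmod (eta s)) \<in> O(u)"
  using eventually_gt_at_top[of 0] by (intro bigo_mult_cancel_divide eta_bigo) auto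

lemma scaled_rho_bigo: "(\<lambda>s. real s * cmod (rho s)) \<in> O(u)"
  using eventually_gt_at_top[of 0] by (intro bigo_mult_cancel_divide rho_bigo) auto

lemma scaled_Z_minus_1_bigo: "(\<lambda>s. sqrt (real s) * cmod (Z s - 1)) \<in> O(u)"
proof -
  have "(\<lambda>s. sqrt (real s) * cmod (Z s - 1)) \<in> O(\<lambda>s. sqrt (u s))"
    using norm_Z_minus_1_bigo eventually_gt_at_top[of 0]
    by (intro bigo_mult_cancel_divide) (auto simp: real_sqrt_divide)
  also have "(\<lambda>s. sqrt (u s)) \<in> O(u)"
    using sqrt_u_le_u by (intro landau_o.big_mono always_eventually) auto
  finally show ?thesis .
qed

lemma D_error_bigo: "(\<lambda>s. cmod (D s - D_lead s)) \<in> O(u)"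
proof -
  define v where "v = pgf_var P / mu"
  have v: "v \<ge> 0"
    using var_pos mean_pos by (simp add: v_def)
  obtain Cg where gamma: "\<forall>\<^sub>F s in sequentially. 0 \<le> gamma s \<and> gamma s \<le> Cg"
    by (rule eventually_gamma_bounds)
  have "\<forall>\<^sub>F s in sequentially. norm (cmod (D s - D_lead s)) \<le> norm
          (v * (real s * cmod (eta s)) + v * Cg * (sqrt (real s) * cmod (Z s - 1))
           + 1 / mu * (real s * cmod (rho s)))"
    using eventually_D_expansion gamma eventually_n_mu
  proof eventually_elim
    case (elim s)
    have t1: "cmod (of_real (real s * pgf_var P / mu) * eta s) = v * (real s * cmod (eta s))"
      unfolding norm_mult norm_of_real using var_pos mean_pos by (simp add: v_def abs_mult)
    have "cmod (of_real (gamma s * sqrt s * pgf_var P / mu) * (Z s - 1)) = v * gamma s * (sqrt s * cmod (Z s - 1))"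
      unfolding norm_mult norm_of_real using var_pos mean_pos elim(2) by (simp add: v_def abs_mult)
    also have "\<dots> \<le> v * Cg * (sqrt s * cmod (Z s - 1))"
      using elim(2) v by (intro mult_right_mono mult_left_mono) auto
    finally have t2: "cmod (of_real (gamma s * sqrt s * pgf_var P / mu) * (Z s - 1))
        \<le> v * Cg * (sqrt s * cmod (Z s - 1))" .
    have "0 \<le> gamma s * sqrt s"
      using elim(2) by simp
    hence "real (n s) \<le> 1 / mu * real s"
      using elim(3) mean_pos by (simp add: field_simps)
    hence t3: "cmod (of_nat (n s) * rho s) \<le> 1 / mu * (real s * cmod (rho s))"
      unfolding norm_mult norm_of_nat mult.assoc[symmetric] by (rule mult_right_mono) simp
    have "cmod (D s - D_lead s) \<le> v * (real s * cmod (eta s)) + v * Cg * (sqrt (real s) * cmod (Z s - 1))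
           + 1 / mu * (real s * cmod (rho s))"
      unfolding elim(1)
      using norm_triangle_ineq[of "of_real (real s * pgf_var P / mu) * eta s
          - of_real (gamma s * sqrt s * pgf_var P / mu) * (Z s - 1)" "of_nat (n s) * rho s"]
        norm_triangle_ineq4[of "of_real (real s * pgf_var P / mu) * eta s"
          "of_real (gamma s * sqrt s * pgf_var P / mu) * (Z s - 1)"] t1 t2 t3
      by linarith
    thus ?case
      by simp
  qed
  hence "(\<lambda>s. cmod (D s - D_lead s)) \<in> O(\<lambda>s. v * (real s * cmod (eta s))
           + v * Cg * (sqrt (real s) * cmod (Z s - 1)) + 1 / mu * (real s * cmod (rho s)))"
    by (rule landau_o.big_mono)
  also have "(\<lambda>s. v * (real s * cmod (eta s)) + v * Cg * (sqrt (real s) * cmod (Z s - 1))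
           + 1 / mu * (real s * cmod (rho s))) \<in> O(u)"
    using scaled_eta_bigo scaled_Z_minus_1_bigo scaled_rho_bigo mean_pos by (intro sum_in_bigo) simp_all
  finally show ?thesis .
qed

lemma relative_error_bigo:
  "(\<lambda>s. cmod (D s - D_lead s) / cmod (D_lead s)) \<in> O(\<lambda>s. sqrt (u s / real s))"
proof -
  obtain K where "K > 0" and K: "\<forall>\<^sub>F s in sequentially. cmod (D s - D_lead s) \<le> K * u s"
    using D_error_bigo by (auto elim!: landau_o.bigE)
  obtain m M where "0 < m" and R: "\<forall>\<^sub>F s in sequentially. sqrt (m * u s) \<le> cmod (R s) \<and> cmod (R s) \<le> sqrt (M * u s)"
    by (rule eventually_norm_R_bounds)
  have "\<forall>\<^sub>F s in sequentially. norm (cmod (D s - D_lead s) / cmod (D_lead s))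
          \<le> K / (kappa * sqrt m) * norm (sqrt (u s / real s))"
    using K R eventually_gt_at_top[of 0]
  proof eventually_elim
    case (elim s)
    have pos: "0 < kappa * sqrt s * sqrt (m * u s)"
      using kappa_pos \<open>0 < m\<close> u_ge_1[of s] elim(3) by simp
    have "cmod (D_lead s) = kappa * sqrt s * cmod (R s)"
      using kappa_pos by (simp add: D_lead_def norm_mult)
    moreover have "kappa * sqrt s * sqrt (m * u s) \<le> kappa * sqrt s * cmod (R s)"
      using elim(2) kappa_pos by (intro mult_left_mono) auto
    ultimately have "kappa * sqrt s * sqrt (m * u s) \<le> cmod (D_lead s)"
      by simp
    hence "cmod (D s - D_lead s) / cmod (D_lead s) \<le> K * u s / (kappa * sqrt s * sqrt (m * u s))"
      using elim(1) pos \<open>K > 0\<close> by (intro frac_le) auto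
    also have "\<dots> = K / (kappa * sqrt m) * sqrt (u s / real s)"
    proof -
      have "K * u s / (kappa * sqrt s * sqrt (m * u s)) = K * (u s / sqrt (u s)) / (kappa * sqrt s * sqrt m)"
        by (simp add: real_sqrt_mult mult.assoc)
      hence "K * u s / (kappa * sqrt s * sqrt (m * u s)) = K * sqrt (u s) / (kappa * sqrt s * sqrt m)"
        by (simp add: real_div_sqrt)
      thus ?thesis
        by (simp add: real_sqrt_divide)
    qed
    finally show ?case
      by simp
  qed
  thus ?thesis
    by (rule bigoI)
qed

lemma relative_error_tendsto_0:
  "((\<lambda>s. cmod (D s - D_lead s) / cmod (D_lead s)) \<longlongrightarrow> 0) sequentially"
  using tendsto_real_sqrt[OF u_over_s_tendsto_0] by (intro bigo_tendsto_0[OF relative_error_bigo]) simp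

lemma eventually_D_near_D_lead:
  "\<forall>\<^sub>F s in sequentially. D_lead s \<noteq> 0 \<and> cmod (D s - D_lead s) \<le> cmod (D_lead s) / 2"
  using order_tendstoD(2)[OF relative_error_tendsto_0, of "1/2", simplified] eventually_R_nonzero eventually_gt_at_top[of 0]
proof eventually_elim
  case (elim s)
  hence "D_lead s \<noteq> 0"
    using kappa_pos by (simp add: D_lead_def)
  thus ?case
    using elim(1) by (simp add: field_simps)
qed

lemma eventually_quotient_eq:
  "\<forall>\<^sub>F s in sequentially.
     - (of_nat s - complex_of_real (real (n s) * mu)) / (of_nat s * Z s ^ (s - 1) - deriv (\<lambda>z. pgf P z ^ n s) (Z s))
     = of_real (b0 s) / R s * (1 / Z s ^ (s - 1)) * (D_lead s / D s)"
  using Z_zero eventually_Z_in_domain eventually_n_mu eventually_R_nonzero eventually_D_near_D_lead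
    eventually_gt_at_top[of 0]
proof eventually_elim
  case (elim s)
  have "D s \<noteq> 0"
    using elim(5) by auto
  have denominator: "of_nat s * Z s ^ (s - 1) - deriv (\<lambda>z. pgf P z ^ n s) (Z s) = - (Z s ^ (s - 1) * D s)"
    using derivative_at_root_factor[OF has_field_derivative_pgf elim(1)] elim(2,6)
    by (simp add: D_def pgf_log_deriv_def flip: mult_minus_right)
  have numerator: "of_nat s - complex_of_real (real (n s) * mu) = of_real (kappa * b0 s * sqrt s)"
    using elim(3) by (simp add: kappa_b0)
  show ?case
    unfolding denominator numerator
    using elim(2,4) \<open>D s \<noteq> 0\<close> by (simp add: D_lead_def field_simps)
qed

theorem quotient_expansion:
  "\<exists>E :: nat \<Rightarrow> complex.
     (\<lambda>s. cmod (E s)) \<in> O(\<lambda>s. (1 + \<bar>real_of_int (k s)\<bar>) / sqrt (real s)) \<and>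
     (\<forall>\<^sub>F s in sequentially.
        - (of_nat s - complex_of_real (real (n s) * mu))
          / (of_nat s * Z s ^ (s - 1) - deriv (\<lambda>z. pgf P z ^ n s) (Z s))
        = complex_of_real (b0 s) / csqrt (complex_of_real ((b0 s)\<^sup>2)
                   - 2 * complex_of_real pi * \<i> * of_int (k s))
          * (1 / Z s ^ (s - 1)) * (1 + E s))"
proof (intro exI conjI)
  let ?E = "\<lambda>s. D_lead s / D s - 1"
  have "\<forall>\<^sub>F s in sequentially. norm (cmod (?E s)) \<le> 2 * norm (cmod (D s - D_lead s) / cmod (D_lead s))"
    using eventually_D_near_D_lead
  proof eventually_elim
    case (elim s)
    thus ?case
      using norm_divide_minus_one_le[of "D s" "D_lead s"] by simp
  qed
  hence "(\<lambda>s. cmod (?E s)) \<in> O(\<lambda>s. cmod (D s - D_lead s) / cmod (D_lead s))"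
    by (rule bigoI)
  also have "(\<lambda>s. cmod (D s - D_lead s) / cmod (D_lead s)) \<in> O(\<lambda>s. sqrt (u s / real s))"
    by (rule relative_error_bigo)
  also have "(\<lambda>s. sqrt (u s / real s)) \<in> O(\<lambda>s. (1 + \<bar>real_of_int (k s)\<bar>) / sqrt (real s))"
  proof (rule bigoI[of _ 1])
    show "\<forall>\<^sub>F s in sequentially. norm (sqrt (u s / real s)) \<le> 1 * norm ((1 + \<bar>real_of_int (k s)\<bar>) / sqrt (real s))"
      using sqrt_u_le_u by (intro always_eventually allI) (simp add: real_sqrt_divide divide_right_mono u_def)
  qed
  finally show "(\<lambda>s. cmod (?E s)) \<in> O(\<lambda>s. (1 + \<bar>real_of_int (k s)\<bar>) / sqrt (real s))" .
  show "\<forall>\<^sub>F s in sequentially.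
        - (of_nat s - complex_of_real (real (n s) * mu))
          / (of_nat s * Z s ^ (s - 1) - deriv (\<lambda>z. pgf P z ^ n s) (Z s))
        = complex_of_real (b0 s) / csqrt (complex_of_real ((b0 s)\<^sup>2)
                   - 2 * complex_of_real pi * \<i> * of_int (k s))
          * (1 / Z s ^ (s - 1)) * (1 + ?E s)"
    using eventually_quotient_eq by (simp add: R_def)
qed

end


theorem lemma5p2:
  fixes P :: "nat pmf"
    and n :: "nat \<Rightarrow> nat"
    and gamma :: "nat \<Rightarrow> real"
    and k :: "nat \<Rightarrow> int"
    and Z :: "nat \<Rightarrow> complex"
  defines "mu \<equiv> pgf_mean P"
    and "sig \<equiv> sqrt (pgf_var P)"
  defines "a0 \<equiv> sqrt (2 * mu) / sig"
    and "b0 \<equiv> (\<lambda>s. gamma s * sqrt mu / (sig * sqrt 2))"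
  assumes radius: "pgf_radius P > 1"
    and mean_pos: "mu > 0"
    and var_pos: "pgf_var P > 0"
    and aperiodic: "\<And>r1 z. 0 < r1 \<Longrightarrow> ereal r1 < pgf_radius P \<Longrightarrow> cmod z = r1 \<Longrightarrow>
                      z \<noteq> complex_of_real r1 \<Longrightarrow> cmod (pgf P z) < cmod (pgf P (complex_of_real r1))"
    and n_pos: "\<forall>\<^sub>F s in sequentially. n s > 0"
    and muA_less: "\<forall>\<^sub>F s in sequentially. real (n s) * mu < real s"
    and degree: "\<forall>\<^sub>F s in sequentially. \<exists>j. real j > real s / real (n s) \<and> pmf P j \<noteq> 0"
    and gamma_def: "\<forall>\<^sub>F s in sequentially. real (n s) * mu / real s = 1 - gamma s / sqrt (real s)"
    and gamma_bounded: "\<exists>c C. 0 < c \<and> c \<le> C \<and> (\<forall>\<^sub>F s in sequentially. c \<le> gamma s \<and> gamma s \<le> C)"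
    and k_small: "(\<lambda>s. real_of_int (k s)) \<in> o(\<lambda>s. real s)"
    and Z_zero: "\<forall>\<^sub>F s in sequentially. Z s ^ s = pgf P (Z s) ^ n s"
    and Z_annulus: "\<forall>\<^sub>F s in sequentially. 1 < cmod (Z s) \<and> ereal (cmod (Z s)) < pgf_radius P"
    and Z_approx: "(\<lambda>s. cmod (Z s - (1 + complex_of_real (a0 / sqrt (real s)) *
                      (complex_of_real (b0 s) + csqrt (complex_of_real ((b0 s)\<^sup>2)
                         - 2 * complex_of_real pi * \<i> * of_int (k s))))))
                   \<in> O(\<lambda>s. (1 + \<bar>real_of_int (k s)\<bar>) / real s)"
  shows "\<exists>E :: nat \<Rightarrow> complex.
           (\<lambda>s. cmod (E s)) \<in> O(\<lambda>s. (1 + \<bar>real_of_int (k s)\<bar>) / sqrt (real s)) \<and>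
           (\<forall>\<^sub>F s in sequentially.
              - (of_nat s - complex_of_real (real (n s) * mu))
                / (of_nat s * Z s ^ (s - 1) - deriv (\<lambda>z. pgf P z ^ n s) (Z s))
              = complex_of_real (b0 s) / csqrt (complex_of_real ((b0 s)\<^sup>2)
                         - 2 * complex_of_real pi * \<i> * of_int (k s))
                * (1 / Z s ^ (s - 1)) * (1 + E s))"
proof -
  \<comment> \<open>The hypotheses aperiodic, n_pos, muA_less, degree and Z_annulus serve to single out the
      root Z among the zeros of z^s - X(z)^n; the estimate only uses its asymptotic expansion.\<close>
  interpret pgf_root_expansion P n gamma k Z mu sig a0 b0
    using radius mean_pos var_pos gamma_def gamma_bounded k_small Z_zero Z_approx
    by unfold_locales (simp_all add: mu_def sig_def a0_def b0_def)
  show ?thesis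
    by (rule quotient_expansion)
qed

end
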